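(* Let $F$ be the $\mathbb{C}$-linear anti-automorphism of $\mathcal{A}_0$ determined by $F(xy)=F(y)F(x)$, $F(a)=a$, $F(b)=-b$, $F(1)=1$. Then $F$ extends to a continuous anti-automorphism $F_{conv}$ of $\tilde{\mathcal{A}}_{conv.}$ given by $F_{conv}(a^pb^q)=(-1)^qb^qa^p$.
   Context: $\mathcal{A}_0$ is the $\mathbb{C}$-algebra of polynomials in $a,b$ subject to $ab-ba=b^2$. $\tilde{\mathcal{A}}_{conv.}$ is the algebra of formal series $\sum\gamma_{p,q}a^pb^q$ (product extending that of $\mathcal{A}_0$) such that $|\gamma_{p,q}|\le C_RR^{p+q}q!$ for some $R>1$, $C_R>0$; it can equivalently be described as the series $\sum\delta_{p,q}b^qa^p$ with $|\delta_{p,q}|\le D_RR^{p+q}q!$. It carries its natural inductive limit topology defined by these bounds. *)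

theory Defs
  imports "HOL-Analysis.Analysis"
begin

text \<open>A formal series \<open>\<Sum> \<gamma>_{p,q} a^p b^q\<close> is represented by its coefficient
  function \<open>\<gamma> p q\<close> (coefficient of the normally ordered monomial \<open>a^p b^q\<close>).\<close>

type_synonym ser = "nat \<Rightarrow> nat \<Rightarrow> complex"

definition mon :: "nat \<Rightarrow> nat \<Rightarrow> ser" where
  "mon p q = (\<lambda>m n. if m = p \<and> n = q then 1 else 0)"

definition ser_add :: "ser \<Rightarrow> ser \<Rightarrow> ser" where
  "ser_add x y = (\<lambda>p q. x p q + y p q)"

definition ser_scale :: "complex \<Rightarrow> ser \<Rightarrow> ser" where
  "ser_scale c x = (\<lambda>p q. c * x p q)"

text \<open>Normal form of \<open>a^p b^q \<cdot> a^r b^s\<close> in \<open>\<A>_0\<close> (relation \<open>ab - ba = b^2\<close>),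
  using \<open>b^q a = a b^q - q b^(q+1)\<close>.\<close>

fun mm :: "nat \<Rightarrow> nat \<Rightarrow> nat \<Rightarrow> nat \<Rightarrow> ser" where
  "mm p q 0 s = mon p (q + s)"
| "mm p q (Suc r) s = (\<lambda>m n. mm (Suc p) q r s m n - of_nat q * mm p (Suc q) r s m n)"

text \<open>Product of formal series extending the product of \<open>\<A>_0\<close>
  (coefficientwise the sum is finite, by homogeneity).\<close>

definition ser_mult :: "ser \<Rightarrow> ser \<Rightarrow> ser" where
  "ser_mult x y = (\<lambda>m n. infsum (\<lambda>(p, q, r, s). x p q * y r s * mm p q r s m n) UNIV)"

definition conv :: "ser set" where
  "conv = {\<gamma>. \<exists>R::real. R > 1 \<and> (\<exists>C::real. \<forall>p q. cmod (\<gamma> p q) \<le> C * R ^ (p + q) * fact q)}"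

text \<open>Closed \<open>\<epsilon>\<close>-ball of the Banach step \<open>B_R\<close> (norm \<open>sup |\<gamma>_{p,q}|/(R^{p+q} q!)\<close>).\<close>

definition step_ball :: "real \<Rightarrow> real \<Rightarrow> ser set" where
  "step_ball R \<epsilon> = {\<gamma>. \<forall>p q. cmod (\<gamma> p q) \<le> \<epsilon> * R ^ (p + q) * fact q}"

definition abs_convex :: "ser set \<Rightarrow> bool" where
  "abs_convex W \<longleftrightarrow> (\<forall>x\<in>W. \<forall>y\<in>W. \<forall>s t::complex. cmod s + cmod t \<le> 1 \<longrightarrow>
      ser_add (ser_scale s x) (ser_scale t y) \<in> W)"

text \<open>Zero neighbourhoods of the locally convex inductive limit topology:
  sets containing an absolutely convex set that contains a ball of every step \<open>B_R\<close>.\<close>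

definition conv_nhd0 :: "ser set \<Rightarrow> bool" where
  "conv_nhd0 U \<longleftrightarrow> (\<exists>W. W \<subseteq> U \<and> W \<subseteq> conv \<and> abs_convex W \<and>
      (\<forall>R>1. \<exists>\<epsilon>>0. step_ball R \<epsilon> \<subseteq> W))"

definition conv_open :: "ser set \<Rightarrow> bool" where
  "conv_open S \<longleftrightarrow> S \<subseteq> conv \<and> (\<forall>x\<in>S. \<exists>N. conv_nhd0 N \<and> (\<forall>n\<in>N. ser_add x n \<in> S))"

definition conv_topology :: "ser topology" where
  "conv_topology = topology conv_open"

definition F_conv :: "ser \<Rightarrow> ser" where
  "F_conv \<gamma> = (\<lambda>m n. infsum (\<lambda>(p, q). (-1) ^ q * \<gamma> p q * ser_mult (mon 0 q) (mon p 0) m n) UNIV)"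

end

theory Submission
  imports Defs
begin

(* Everything is graded by total degree: the coefficient of a^m b^n in a product or in F_conv
   only involves coefficients of degree m + n, so all series operations are finite sums.

   The algebraic identities are tested against a separating family of functionals.  For every
   z the rule a e_k = (z + k) e_(k+1), b e_k = e_(k+1) is a representation of A_0 on the span
   of e_0, e_1, ..., since (ab - ba) e_k = e_(k+2) = b^2 e_k.  The e_d-coefficient of w e_0 is
   a finite sum of rising factorials in z; letting z run through suitable integers recovers
   every coefficient of w.  Both F_conv (F_conv w) and w, and F_conv (x y) and
   F_conv y * F_conv x, have the same coefficients in these representations.

   Analytically, the normal ordering of b^q a^p has coefficients bounded by 2^p n!/q!, which
   turns the bound C R^(p+q) q! into C (4R)^(p+q) q!.  So F_conv maps every Banach step B_R
   boundedly into B_4R, hence conv into itself continuously. *)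

section \<open>Homogeneous components\<close>

definition antidiag :: "nat \<Rightarrow> (nat \<times> nat) set" where
  "antidiag d = {(p, q). p + q = d}"

definition antidiag4 :: "nat \<Rightarrow> (nat \<times> nat \<times> nat \<times> nat) set" where
  "antidiag4 d = {(p, q, r, s). p + q + r + s = d}"

lemma finite_antidiag [simp]: "finite (antidiag d)"
  by (rule finite_subset[of _ "{..d} \<times> {..d}"]) (auto simp: antidiag_def)

lemma finite_antidiag4 [simp]: "finite (antidiag4 d)"
  by (rule finite_subset[of _ "{..d} \<times> {..d} \<times> {..d} \<times> {..d}"]) (auto simp: antidiag4_def)

lemma card_antidiag: "card (antidiag d) = Suc d"
proof -
  have "antidiag d = (\<lambda>k. (k, d - k)) ` {..d}"
    by (auto simp: antidiag_def image_iff)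
  moreover have "inj_on (\<lambda>k. (k, d - k)) {..d}"
    by (rule inj_onI) simp
  ultimately show ?thesis
    by (simp add: card_image)
qed

lemma sum_antidiag4_by_degree:
  fixes f :: "nat \<Rightarrow> nat \<Rightarrow> nat \<Rightarrow> 'a::comm_semiring_1" and g :: "nat \<Rightarrow> nat \<Rightarrow> 'a"
  shows "(\<Sum>(p, q, r, s)\<in>antidiag4 d. f p q (r + s) * g r s)
    = (\<Sum>e\<le>d. (\<Sum>(p, q)\<in>antidiag (d - e). f p q e) * (\<Sum>(r, s)\<in>antidiag e. g r s))"
proof -
  have "(\<Sum>(p, q, r, s)\<in>antidiag4 d. f p q (r + s) * g r s)
      = (\<Sum>(e, x)\<in>Sigma {..d} (\<lambda>e. antidiag (d - e) \<times> antidiag e).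
           (case fst x of (p, q) \<Rightarrow> f p q e) * (case snd x of (r, s) \<Rightarrow> g r s))"
    by (rule sum.reindex_bij_witness[where j = "\<lambda>(p, q, r, s). (r + s, (p, q), (r, s))"
          and i = "\<lambda>(e, (p, q), (r, s)). (p, q, r, s)"]) (auto simp: antidiag4_def antidiag_def)
  also have "\<dots> = (\<Sum>e\<le>d. \<Sum>x\<in>antidiag (d - e) \<times> antidiag e.
      (case fst x of (p, q) \<Rightarrow> f p q e) * (case snd x of (r, s) \<Rightarrow> g r s))"
    by (subst sum.Sigma) auto
  also have "\<dots> = (\<Sum>e\<le>d. (\<Sum>(p, q)\<in>antidiag (d - e). f p q e) * (\<Sum>(r, s)\<in>antidiag e. g r s))"
    by (simp add: sum_product sum.cartesian_product' case_prod_unfold)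
  finally show ?thesis .
qed

lemma mm_eq_0_off_degree: "m + n \<noteq> p + q + r + s \<Longrightarrow> mm p q r s m n = 0"
  by (induction r arbitrary: p q) (simp_all add: mon_def)

lemma ser_mult_eq_sum:
  "ser_mult x y m n = (\<Sum>(p, q, r, s)\<in>antidiag4 (m + n). x p q * y r s * mm p q r s m n)"
proof -
  have "ser_mult x y m n
      = infsum (\<lambda>(p, q, r, s). x p q * y r s * mm p q r s m n) (antidiag4 (m + n))"
    unfolding ser_mult_def
    by (rule infsum_cong_neutral) (auto simp: antidiag4_def mm_eq_0_off_degree)
  then show ?thesis by simp
qed

lemma ser_mult_mon_mon: "ser_mult (mon p q) (mon r s) = mm p q r s"
proof (intro ext)
  fix m n
  have "ser_mult (mon p q) (mon r s) m n
      = (\<Sum>x\<in>antidiag4 (m + n). if x = (p, q, r, s) then mm p q r s m n else 0)"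
    unfolding ser_mult_eq_sum by (intro sum.cong refl) (auto simp: mon_def split: if_splits)
  also have "\<dots> = mm p q r s m n"
    by (subst sum.delta[OF finite_antidiag4]) (simp add: antidiag4_def mm_eq_0_off_degree)
  finally show "ser_mult (mon p q) (mon r s) m n = mm p q r s m n" .
qed

lemma F_conv_eq_sum:
  "F_conv w m n = (\<Sum>(p, q)\<in>antidiag (m + n). (-1) ^ q * w p q * mm 0 q p 0 m n)"
proof -
  have "F_conv w m n = infsum (\<lambda>(p, q). (-1) ^ q * w p q * mm 0 q p 0 m n) (antidiag (m + n))"
    unfolding F_conv_def ser_mult_mon_mon
    by (rule infsum_cong_neutral) (auto simp: antidiag_def mm_eq_0_off_degree)
  then show ?thesis by simp
qed

lemma F_conv_mon: "F_conv (mon p q) = ser_scale ((-1) ^ q) (ser_mult (mon 0 q) (mon p 0))"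
proof (intro ext)
  fix m n
  have "F_conv (mon p q) m n
      = (\<Sum>x\<in>antidiag (m + n). if x = (p, q) then (-1) ^ q * mm 0 q p 0 m n else 0)"
    unfolding F_conv_eq_sum by (intro sum.cong refl) (auto simp: mon_def split: if_splits)
  also have "\<dots> = (-1) ^ q * mm 0 q p 0 m n"
    by (subst sum.delta[OF finite_antidiag]) (simp add: antidiag_def mm_eq_0_off_degree)
  finally show "F_conv (mon p q) m n = ser_scale ((-1) ^ q) (ser_mult (mon 0 q) (mon p 0)) m n"
    by (simp add: ser_scale_def ser_mult_mon_mon)
qed

lemma F_conv_ser_add: "F_conv (ser_add x y) = ser_add (F_conv x) (F_conv y)"
  by (intro ext) (simp add: F_conv_eq_sum ser_add_def case_prod_unfold algebra_simps sum.distrib)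

lemma F_conv_ser_scale: "F_conv (ser_scale c x) = ser_scale c (F_conv x)"
  by (intro ext) (simp add: F_conv_eq_sum ser_scale_def case_prod_unfold algebra_simps sum_distrib_left)

section \<open>A separating family of representations\<close>

definition deg_pairing :: "(nat \<Rightarrow> nat \<Rightarrow> complex) \<Rightarrow> nat \<Rightarrow> ser \<Rightarrow> complex" where
  "deg_pairing g d w = (\<Sum>(m, n)\<in>antidiag d. w m n * g m n)"

lemma deg_pairing_diff:
  "deg_pairing g d (\<lambda>m n. u m n - c * v m n) = deg_pairing g d u - c * deg_pairing g d v"
  unfolding deg_pairing_def by (simp add: case_prod_unfold algebra_simps sum_subtractf sum_distrib_left)

lemma deg_pairing_mon: "deg_pairing g d (mon p q) = (if p + q = d then g p q else 0)"
proof -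
  have "deg_pairing g d (mon p q) = (\<Sum>x\<in>antidiag d. if x = (p, q) then g p q else 0)"
    unfolding deg_pairing_def mon_def by (intro sum.cong refl) (auto split: if_splits)
  also have "\<dots> = (if p + q = d then g p q else 0)"
    by (subst sum.delta[OF finite_antidiag]) (simp add: antidiag_def)
  finally show ?thesis .
qed

lemma deg_pairing_ser_mult:
  "deg_pairing g d (ser_mult x y)
    = (\<Sum>(p, q, r, s)\<in>antidiag4 d. x p q * y r s * deg_pairing g d (mm p q r s))"
proof -
  have "deg_pairing g d (ser_mult x y)
      = (\<Sum>(m, n)\<in>antidiag d. \<Sum>(p, q, r, s)\<in>antidiag4 d. x p q * y r s * mm p q r s m n * g m n)"
    unfolding deg_pairing_def
    by (intro sum.cong refl) (auto simp: antidiag_def ser_mult_eq_sum sum_distrib_right case_prod_unfold)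
  also have "\<dots> = (\<Sum>(p, q, r, s)\<in>antidiag4 d. \<Sum>(m, n)\<in>antidiag d. x p q * y r s * mm p q r s m n * g m n)"
    unfolding case_prod_unfold by (rule sum.swap)
  also have "\<dots> = (\<Sum>(p, q, r, s)\<in>antidiag4 d. x p q * y r s * deg_pairing g d (mm p q r s))"
    unfolding deg_pairing_def
    by (intro sum.cong refl) (auto simp: sum_distrib_left mult.assoc case_prod_unfold)
  finally show ?thesis .
qed

lemma deg_pairing_F_conv:
  "deg_pairing g d (F_conv w) = (\<Sum>(p, q)\<in>antidiag d. (-1) ^ q * w p q * deg_pairing g d (mm 0 q p 0))"
proof -
  have "deg_pairing g d (F_conv w)
      = (\<Sum>(m, n)\<in>antidiag d. \<Sum>(p, q)\<in>antidiag d. (-1) ^ q * w p q * mm 0 q p 0 m n * g m n)"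
    unfolding deg_pairing_def
    by (intro sum.cong refl) (auto simp: antidiag_def F_conv_eq_sum sum_distrib_right case_prod_unfold)
  also have "\<dots> = (\<Sum>(p, q)\<in>antidiag d. \<Sum>(m, n)\<in>antidiag d. (-1) ^ q * w p q * mm 0 q p 0 m n * g m n)"
    unfolding case_prod_unfold by (rule sum.swap)
  also have "\<dots> = (\<Sum>(p, q)\<in>antidiag d. (-1) ^ q * w p q * deg_pairing g d (mm 0 q p 0))"
    unfolding deg_pairing_def
    by (intro sum.cong refl) (auto simp: sum_distrib_left mult.assoc case_prod_unfold)
  finally show ?thesis .
qed

(* In the representation a e_k = (z + k) e_(k+1), b e_k = e_(k+1):
   a^m b^n e_0 = rising_weight z m n e_(m+n) and (-1)^n b^n a^m e_0 = reversed_weight z m n e_(m+n). *)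

definition rising_weight :: "complex \<Rightarrow> nat \<Rightarrow> nat \<Rightarrow> complex" where
  "rising_weight z = (\<lambda>m n. pochhammer (z + of_nat n) m)"

definition reversed_weight :: "complex \<Rightarrow> nat \<Rightarrow> nat \<Rightarrow> complex" where
  "reversed_weight z = (\<lambda>m n. (-1) ^ n * pochhammer z m)"

lemma deg_pairing_rising_mm:
  "deg_pairing (rising_weight z) d (mm p q r s) =
    (if p + q + r + s = d
     then pochhammer (z + of_nat s) r * pochhammer (z + of_nat (s + r + q)) p else 0)"
proof (induction r arbitrary: p q)
  case 0
  then show ?case by (simp add: deg_pairing_mon rising_weight_def add.commute add.left_commute)
next
  case (Suc r)
  have "pochhammer (z + of_nat (s + r + q)) (Suc p)
      = (z + of_nat (s + r + q)) * pochhammer (z + of_nat (s + r + Suc q)) p"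
    by (simp add: pochhammer_rec ac_simps)
  moreover have "pochhammer (z + of_nat s) (Suc r) = (z + of_nat s + of_nat r) * pochhammer (z + of_nat s) r"
    by (simp add: pochhammer_rec')
  moreover have "z + of_nat (s + Suc r + q) = z + of_nat (s + r + Suc q)"
    by simp
  ultimately show ?case
    by (simp only: mm.simps deg_pairing_diff Suc) (auto simp: algebra_simps)
qed

lemma deg_pairing_reversed_mm:
  "deg_pairing (reversed_weight z) d (mm p q r s) =
    (if p + q + r + s = d
     then (-1) ^ (q + s) * pochhammer z p * pochhammer (z + of_nat (p + q)) r else 0)"
proof (induction r arbitrary: p q)
  case 0
  then show ?case by (simp add: deg_pairing_mon reversed_weight_def)
next
  case (Suc r)
  have "pochhammer z (Suc p) = (z + of_nat p) * pochhammer z p"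
    by (simp add: pochhammer_rec')
  moreover have "pochhammer (z + of_nat (p + q)) (Suc r)
      = (z + of_nat (p + q)) * pochhammer (z + of_nat (Suc p + q)) r"
    by (simp add: pochhammer_rec ac_simps)
  moreover have "z + of_nat (p + Suc q) = z + of_nat (Suc p + q)"
    by simp
  ultimately show ?case
    by (simp only: mm.simps deg_pairing_diff Suc) (auto simp: algebra_simps)
qed

(* v e_0 is the sum over e of (deg_pairing (rising_weight z) e v) e_e, and u acts on e_e
   as it acts on e_0 with z replaced by z + e. *)
lemma deg_pairing_rising_ser_mult:
  "deg_pairing (rising_weight z) d (ser_mult u v)
    = (\<Sum>e\<le>d. deg_pairing (rising_weight (z + of_nat e)) (d - e) u * deg_pairing (rising_weight z) e v)"
proof -
  have "deg_pairing (rising_weight z) d (ser_mult u v)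
      = (\<Sum>(p, q, r, s)\<in>antidiag4 d. (u p q * pochhammer (z + of_nat (r + s) + of_nat q) p)
           * (v r s * pochhammer (z + of_nat s) r))"
    unfolding deg_pairing_ser_mult
    by (intro sum.cong refl) (auto simp: deg_pairing_rising_mm antidiag4_def algebra_simps)
  also have "\<dots> = (\<Sum>e\<le>d. (\<Sum>(p, q)\<in>antidiag (d - e). u p q * pochhammer (z + of_nat e + of_nat q) p)
      * (\<Sum>(r, s)\<in>antidiag e. v r s * pochhammer (z + of_nat s) r))"
    by (rule sum_antidiag4_by_degree)
  finally show ?thesis
    by (simp add: deg_pairing_def rising_weight_def)
qed

lemma deg_pairing_rising_F_conv:
  "deg_pairing (rising_weight z) d (F_conv w) = deg_pairing (reversed_weight z) d w"
proof -
  have "deg_pairing (rising_weight z) d (F_conv w)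
      = (\<Sum>(p, q)\<in>antidiag d. w p q * ((-1) ^ q * pochhammer z p))"
    unfolding deg_pairing_F_conv
    by (intro sum.cong refl) (auto simp: deg_pairing_rising_mm antidiag_def)
  then show ?thesis
    by (simp add: deg_pairing_def reversed_weight_def)
qed

lemma deg_pairing_reversed_F_conv:
  "deg_pairing (reversed_weight z) d (F_conv w) = deg_pairing (rising_weight z) d w"
proof -
  have "deg_pairing (reversed_weight z) d (F_conv w)
      = (\<Sum>(p, q)\<in>antidiag d. ((-1) ^ q * (-1) ^ q) * (w p q * pochhammer (z + of_nat q) p))"
    unfolding deg_pairing_F_conv
    by (intro sum.cong refl) (auto simp: deg_pairing_reversed_mm antidiag_def)
  also have "\<dots> = deg_pairing (rising_weight z) d w"
    by (simp add: deg_pairing_def rising_weight_def flip: power_add)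
  finally show ?thesis .
qed

(* With z = i + 1 - d the weight of a^m b^(d-m) vanishes for m > i and equals i! for m = i,
   so the coefficients of degree d vanish one at a time, by strong induction on i. *)
lemma ser_eq_0_by_rising_pairing:
  assumes "\<And>d z. deg_pairing (rising_weight z) d w = 0"
  shows "w p q = 0"
proof -
  define d where "d = p + q"
  have "i \<le> d \<longrightarrow> w i (d - i) = 0" for i
  proof (induction i rule: less_induct)
    case (less i)
    show ?case
    proof
      assume i_le: "i \<le> d"
      define z :: complex where "z = of_nat (i + 1) - of_nat d"
      have "deg_pairing (rising_weight z) d w
          = (\<Sum>x\<in>antidiag d. if x = (i, d - i) then w i (d - i) * fact i else 0)"
        unfolding deg_pairing_def
      proof (intro sum.cong refl, clarify)
        fix m n assume "(m, n) \<in> antidiag d"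
        then have n: "n = d - m" "m \<le> d" by (auto simp: antidiag_def)
        consider "m < i" | "m = i" | "m > i" by linarith
        then show "w m n * rising_weight z m n
            = (if (m, n) = (i, d - i) then w i (d - i) * fact i else 0)"
        proof cases
          case 1
          then show ?thesis using less.IH[of m] n i_le by auto
        next
          case 2
          then have "z + of_nat n = 1" using n i_le by (simp add: z_def of_nat_diff)
          then show ?thesis using 2 n by (simp add: rising_weight_def pochhammer_fact)
        next
          case 3
          then have "z + of_nat n = - of_nat (m - i - 1)" and "m - i - 1 < m"
            using n i_le by (simp_all add: z_def of_nat_diff)
          then have "pochhammer (z + of_nat n) m = 0"
            by (subst pochhammer_eq_0_iff) blast
          then show ?thesis using 3 by (simp add: rising_weight_def)
        qed
      qed
      also have "\<dots> = w i (d - i) * fact i"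
        by (subst sum.delta[OF finite_antidiag]) (simp add: antidiag_def i_le)
      finally show "w i (d - i) = 0" using assms by simp
    qed
  qed
  from this[of p] show ?thesis by (simp add: d_def)
qed

lemma ser_eqI_rising_pairing:
  assumes "\<And>d z. deg_pairing (rising_weight z) d u = deg_pairing (rising_weight z) d v"
  shows "u = v"
proof (intro ext)
  fix p q
  have "(\<lambda>m n. u m n - 1 * v m n) p q = 0"
    by (rule ser_eq_0_by_rising_pairing) (simp only: deg_pairing_diff assms, simp)
  then show "u p q = v p q" by simp
qed

lemma F_conv_F_conv: "F_conv (F_conv w) = w"
  by (rule ser_eqI_rising_pairing) (simp add: deg_pairing_rising_F_conv deg_pairing_reversed_F_conv)

lemma F_conv_ser_mult: "F_conv (ser_mult x y) = ser_mult (F_conv y) (F_conv x)"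
proof (rule ser_eqI_rising_pairing)
  fix d z
  have "deg_pairing (rising_weight z) d (F_conv (ser_mult x y))
      = (\<Sum>(p, q, r, s)\<in>antidiag4 d.
           x p q * y r s * ((-1) ^ (q + s) * pochhammer z p * pochhammer (z + of_nat (p + q)) r))"
    unfolding deg_pairing_rising_F_conv deg_pairing_ser_mult
    by (intro sum.cong refl) (auto simp: deg_pairing_reversed_mm antidiag4_def)
  also have "\<dots> = (\<Sum>(p, q, r, s)\<in>antidiag4 d.
      (y p q * ((-1) ^ q * pochhammer (z + of_nat (r + s)) p)) * (x r s * ((-1) ^ s * pochhammer z r)))"
    by (rule sum.reindex_bij_witness[where i = "\<lambda>(p, q, r, s). (r, s, p, q)" and j = "\<lambda>(p, q, r, s). (r, s, p, q)"])
       (auto simp: antidiag4_def power_add)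
  also have "\<dots> = (\<Sum>e\<le>d.
      (\<Sum>(p, q)\<in>antidiag (d - e). y p q * ((-1) ^ q * pochhammer (z + of_nat e) p)) *
      (\<Sum>(r, s)\<in>antidiag e. x r s * ((-1) ^ s * pochhammer z r)))"
    by (rule sum_antidiag4_by_degree)
  also have "\<dots> = (\<Sum>e\<le>d. deg_pairing (rising_weight (z + of_nat e)) (d - e) (F_conv y)
      * deg_pairing (rising_weight z) e (F_conv x))"
    by (simp only: deg_pairing_rising_F_conv) (simp add: deg_pairing_def reversed_weight_def)
  also have "\<dots> = deg_pairing (rising_weight z) d (ser_mult (F_conv y) (F_conv x))"
    by (rule deg_pairing_rising_ser_mult[symmetric])
  finally show "deg_pairing (rising_weight z) d (F_conv (ser_mult x y))
      = deg_pairing (rising_weight z) d (ser_mult (F_conv y) (F_conv x))" .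
qed

section \<open>Growth estimates\<close>

lemma fact_mult_fact_le_fact_add: "(fact q * fact s :: real) \<le> fact (q + s)"
proof -
  have "fact q * fact s \<le> (fact (q + s) :: nat)"
    by (rule dvd_imp_le[OF fact_fact_dvd_fact]) simp
  then show ?thesis
    by (metis of_nat_fact of_nat_le_iff of_nat_mult)
qed

lemma norm_mm_le: "cmod (mm p q r s m n) * fact q * fact s \<le> 2 ^ r * fact n"
proof (induction r arbitrary: p q)
  case 0
  then show ?case
    using fact_mult_fact_le_fact_add[of q s] by (auto simp: mon_def)
next
  case (Suc r)
  let ?A = "cmod (mm (Suc p) q r s m n)" and ?B = "cmod (mm p (Suc q) r s m n)"
  have "cmod (mm p q (Suc r) s m n) \<le> ?A + of_nat q * ?B"
    by (simp add: norm_triangle_ineq4[THEN order_trans] norm_mult)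
  then have "cmod (mm p q (Suc r) s m n) * fact q * fact s \<le> (?A + of_nat q * ?B) * fact q * fact s"
    by (intro mult_right_mono) auto
  also have "\<dots> = ?A * fact q * fact s + of_nat q * (?B * fact q * fact s)"
    by (simp add: algebra_simps)
  also have "of_nat q * (?B * fact q * fact s) \<le> ?B * fact (Suc q) * fact s"
    by (simp add: algebra_simps mult_right_mono)
  also have "?A * fact q * fact s + ?B * fact (Suc q) * fact s \<le> 2 ^ Suc r * fact n"
    using Suc[of "Suc p" q] Suc[of p "Suc q"] by simp
  finally show ?case by simp
qed

lemma norm_F_conv_le:
  assumes "0 \<le> C" "0 \<le> R" and w: "\<And>p q. cmod (w p q) \<le> C * R ^ (p + q) * fact q"
  shows "cmod (F_conv w m n) \<le> C * (4 * R) ^ (m + n) * fact n"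
proof -
  define d where "d = m + n"
  have term_le: "cmod ((-1) ^ q * w p q * mm 0 q p 0 m n) \<le> C * R ^ d * 2 ^ d * fact n"
    if "(p, q) \<in> antidiag d" for p q
  proof -
    have pq: "p + q = d" using that by (simp add: antidiag_def)
    have "cmod ((-1) ^ q * w p q * mm 0 q p 0 m n) = cmod (w p q) * cmod (mm 0 q p 0 m n)"
      by (simp add: norm_mult norm_power)
    also have "\<dots> \<le> C * R ^ d * (cmod (mm 0 q p 0 m n) * fact q * fact 0)"
      using mult_right_mono[OF w[of p q] norm_ge_zero[of "mm 0 q p 0 m n"]] pq by (simp add: mult_ac)
    also have "\<dots> \<le> C * R ^ d * (2 ^ p * fact n)"
      using norm_mm_le[of 0 q p 0 m n] assms by (intro mult_left_mono) auto
    also have "\<dots> \<le> C * R ^ d * (2 ^ d * fact n)"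
      using pq assms by (intro mult_left_mono mult_right_mono power_increasing) auto
    finally show ?thesis by (simp add: mult_ac)
  qed
  have "cmod (F_conv w m n) \<le> (\<Sum>(p, q)\<in>antidiag d. cmod ((-1) ^ q * w p q * mm 0 q p 0 m n))"
    unfolding F_conv_eq_sum d_def[symmetric] case_prod_unfold by (rule norm_sum)
  also have "\<dots> \<le> of_nat (card (antidiag d)) * (C * R ^ d * 2 ^ d * fact n)"
    by (rule sum_bounded_above) (use term_le in auto)
  also have "\<dots> \<le> 2 ^ d * (C * R ^ d * 2 ^ d * fact n)"
  proof (rule mult_right_mono)
    have "Suc d \<le> 2 ^ d"
      by (rule Suc_leI[OF less_exp])
    then show "real (card (antidiag d)) \<le> 2 ^ d"
      unfolding card_antidiag by (metis of_nat_le_iff of_nat_numeral of_nat_power)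
  qed (use assms in simp)
  also have "\<dots> = C * (4 * R) ^ d * fact n"
    using power_mult_distrib[of "2::real" 2 d] by (simp add: power_mult_distrib mult_ac)
  finally show ?thesis by (simp add: d_def)
qed

lemma step_ball_mono:
  assumes "0 \<le> e" "e \<le> e'" "0 \<le> R" "R \<le> R'"
  shows "step_ball R e \<subseteq> step_ball R' e'"
proof
  fix x assume x: "x \<in> step_ball R e"
  have "cmod (x p q) \<le> e' * R' ^ (p + q) * fact q" for p q
  proof -
    have "cmod (x p q) \<le> e * R ^ (p + q) * fact q"
      using x by (simp add: step_ball_def)
    also have "\<dots> \<le> e' * R' ^ (p + q) * fact q"
      using assms by (intro mult_right_mono mult_mono power_mono) auto
    finally show ?thesis .
  qed
  then show "x \<in> step_ball R' e'"
    by (simp add: step_ball_def)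
qed

lemma ser_add_step_ball:
  "x \<in> step_ball R e \<Longrightarrow> y \<in> step_ball R e' \<Longrightarrow> ser_add x y \<in> step_ball R (e + e')"
  unfolding step_ball_def ser_add_def
  by (auto simp: distrib_right intro!: order_trans[OF norm_triangle_ineq add_mono])

lemma ser_scale_step_ball:
  "x \<in> step_ball R e \<Longrightarrow> ser_scale c x \<in> step_ball R (cmod c * e)"
  unfolding step_ball_def ser_scale_def
  by (auto simp: norm_mult mult.assoc intro: mult_left_mono)

lemma step_ball_subset_conv: "R > 1 \<Longrightarrow> step_ball R e \<subseteq> conv"
  unfolding step_ball_def conv_def by blast

lemma convE:
  assumes "x \<in> conv"
  obtains R C where "R > 1" "C \<ge> 0" "x \<in> step_ball R C"
proof -
  from assms obtain R C where "R > 1" and x: "\<And>p q. cmod (x p q) \<le> C * R ^ (p + q) * fact q"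
    unfolding conv_def by blast
  moreover have "cmod (x 0 0) \<le> C"
    using x[of 0 0] by simp
  then have "0 \<le> C"
    using norm_ge_zero order_trans by blast
  ultimately show ?thesis
    using that by (auto simp: step_ball_def)
qed

lemma conv_ser_add:
  assumes "x \<in> conv" "y \<in> conv"
  shows "ser_add x y \<in> conv"
proof -
  obtain R1 C1 where R1: "R1 > 1" "C1 \<ge> 0" "x \<in> step_ball R1 C1"
    using assms(1) by (rule convE)
  obtain R2 C2 where R2: "R2 > 1" "C2 \<ge> 0" "y \<in> step_ball R2 C2"
    using assms(2) by (rule convE)
  have "x \<in> step_ball (max R1 R2) C1" "y \<in> step_ball (max R1 R2) C2"
    using R1 R2 step_ball_mono[of C1 C1 R1 "max R1 R2"] step_ball_mono[of C2 C2 R2 "max R1 R2"] by auto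
  then have "ser_add x y \<in> step_ball (max R1 R2) (C1 + C2)"
    by (rule ser_add_step_ball)
  moreover have "max R1 R2 > 1"
    using R1 by simp
  ultimately show ?thesis
    using step_ball_subset_conv by blast
qed

lemma conv_ser_scale: "x \<in> conv \<Longrightarrow> ser_scale c x \<in> conv"
  by (elim convE) (use ser_scale_step_ball step_ball_subset_conv in blast)

lemma F_conv_step_ball: "0 \<le> e \<Longrightarrow> 0 \<le> R \<Longrightarrow> F_conv ` step_ball R e \<subseteq> step_ball (4 * R) e"
  unfolding step_ball_def using norm_F_conv_le by blast

lemma F_conv_conv: "x \<in> conv \<Longrightarrow> F_conv x \<in> conv"
proof (elim convE)
  fix R C assume "R > 1" "C \<ge> 0" "x \<in> step_ball R C"
  then have "F_conv x \<in> step_ball (4 * R) C"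
    using F_conv_step_ball[of C R] by auto
  then show "F_conv x \<in> conv"
    using \<open>R > 1\<close> step_ball_subset_conv[of "4 * R"] by auto
qed

section \<open>The inductive limit topology\<close>

lemma abs_convex_Int: "abs_convex A \<Longrightarrow> abs_convex B \<Longrightarrow> abs_convex (A \<inter> B)"
  unfolding abs_convex_def by (simp add: Ball_def)

lemma abs_convex_conv: "abs_convex conv"
  unfolding abs_convex_def by (auto intro: conv_ser_add conv_ser_scale)

lemma conv_nhd0_conv: "conv_nhd0 conv"
  unfolding conv_nhd0_def
  using abs_convex_conv step_ball_subset_conv by (intro exI[of _ conv]) (auto intro: exI[of _ 1])

lemma conv_nhd0_Int:
  assumes "conv_nhd0 N1" "conv_nhd0 N2"
  shows "conv_nhd0 (N1 \<inter> N2)"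
proof -
  obtain W1 where W1: "W1 \<subseteq> N1" "W1 \<subseteq> conv" "abs_convex W1" "\<forall>R>1. \<exists>e>0. step_ball R e \<subseteq> W1"
    using assms(1) unfolding conv_nhd0_def by blast
  obtain W2 where W2: "W2 \<subseteq> N2" "W2 \<subseteq> conv" "abs_convex W2" "\<forall>R>1. \<exists>e>0. step_ball R e \<subseteq> W2"
    using assms(2) unfolding conv_nhd0_def by blast
  have "\<exists>e>0. step_ball R e \<subseteq> W1 \<inter> W2" if "R > 1" for R
  proof -
    obtain e1 e2 where "e1 > 0" "step_ball R e1 \<subseteq> W1" "e2 > 0" "step_ball R e2 \<subseteq> W2"
      using W1(4) W2(4) \<open>R > 1\<close> by blast
    then show ?thesis
      using step_ball_mono[of "min e1 e2" e1 R R] step_ball_mono[of "min e1 e2" e2 R R] \<open>R > 1\<close>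
      by (intro exI[of _ "min e1 e2"]) auto
  qed
  with W1 W2 show ?thesis
    unfolding conv_nhd0_def by (intro exI[of _ "W1 \<inter> W2"]) (auto intro: abs_convex_Int)
qed

lemma istopology_conv_open: "istopology conv_open"
  unfolding istopology_def
proof (intro conjI allI impI)
  fix S U assume S: "conv_open S" and U: "conv_open U"
  show "conv_open (S \<inter> U)"
    unfolding conv_open_def
  proof (intro conjI ballI)
    show "S \<inter> U \<subseteq> conv"
      using S by (auto simp: conv_open_def)
    fix x assume x: "x \<in> S \<inter> U"
    obtain N1 where "conv_nhd0 N1" "\<forall>n\<in>N1. ser_add x n \<in> S"
      using S x by (auto simp: conv_open_def)
    moreover obtain N2 where "conv_nhd0 N2" "\<forall>n\<in>N2. ser_add x n \<in> U"
      using U x by (auto simp: conv_open_def)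
    ultimately show "\<exists>N. conv_nhd0 N \<and> (\<forall>n\<in>N. ser_add x n \<in> S \<inter> U)"
      by (intro exI[of _ "N1 \<inter> N2"]) (simp add: conv_nhd0_Int)
  qed
next
  fix K assume K: "\<forall>S\<in>K. conv_open S"
  show "conv_open (\<Union>K)"
    unfolding conv_open_def
  proof (intro conjI ballI)
    show "\<Union>K \<subseteq> conv"
      using K by (auto simp: conv_open_def)
    fix x assume "x \<in> \<Union>K"
    then obtain S where "S \<in> K" "x \<in> S"
      by blast
    moreover obtain N where "conv_nhd0 N" "\<forall>n\<in>N. ser_add x n \<in> S"
      using K calculation unfolding conv_open_def by metis
    ultimately show "\<exists>N. conv_nhd0 N \<and> (\<forall>n\<in>N. ser_add x n \<in> \<Union>K)"
      by blast
  qed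
qed

lemma openin_conv_topology: "openin conv_topology = conv_open"
  unfolding conv_topology_def using istopology_conv_open by simp

lemma topspace_conv_topology: "topspace conv_topology = conv"
proof -
  have "conv_open conv"
    unfolding conv_open_def using conv_nhd0_conv conv_ser_add by blast
  then show ?thesis
    unfolding topspace_def openin_conv_topology conv_open_def by blast
qed

context
  fixes L :: "ser \<Rightarrow> ser"
  assumes L_conv: "\<And>x. x \<in> conv \<Longrightarrow> L x \<in> conv"
    and L_add: "\<And>x y. x \<in> conv \<Longrightarrow> y \<in> conv \<Longrightarrow> L (ser_add x y) = ser_add (L x) (L y)"
    and L_scale: "\<And>c x. x \<in> conv \<Longrightarrow> L (ser_scale c x) = ser_scale c (L x)"
    and L_step_ball: "\<And>R. R > 1 \<Longrightarrow> \<exists>R'>1. \<forall>e>0. L ` step_ball R e \<subseteq> step_ball R' e"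
begin

lemma conv_nhd0_vimage:
  assumes "conv_nhd0 N"
  shows "conv_nhd0 {v \<in> conv. L v \<in> N}"
proof -
  obtain W where W: "W \<subseteq> N" "abs_convex W" "\<forall>R>1. \<exists>e>0. step_ball R e \<subseteq> W"
    using assms unfolding conv_nhd0_def by blast
  define W' where "W' = {v \<in> conv. L v \<in> W}"
  have "abs_convex W'"
    unfolding abs_convex_def
  proof (intro ballI allI impI)
    fix u v s t assume "u \<in> W'" "v \<in> W'" "cmod s + cmod t \<le> 1"
    then show "ser_add (ser_scale s u) (ser_scale t v) \<in> W'"
      using W(2) unfolding W'_def abs_convex_def
      by (simp add: L_add L_scale conv_ser_add conv_ser_scale)
  qed
  moreover have "\<exists>e>0. step_ball R e \<subseteq> W'" if "R > 1" for R
  proof -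
    obtain R' where "R' > 1" and R': "\<forall>e>0. L ` step_ball R e \<subseteq> step_ball R' e"
      using L_step_ball \<open>R > 1\<close> by blast
    then obtain e where "e > 0" "step_ball R' e \<subseteq> W"
      using W(3) by blast
    then show ?thesis
      using R' step_ball_subset_conv[OF \<open>R > 1\<close>] unfolding W'_def by blast
  qed
  ultimately show ?thesis
    unfolding conv_nhd0_def using W(1) by (intro exI[of _ W']) (auto simp: W'_def)
qed

lemma continuous_map_conv_topology: "continuous_map conv_topology conv_topology L"
  unfolding continuous_map_def topspace_conv_topology openin_conv_topology
proof (intro conjI allI impI)
  show "L \<in> conv \<rightarrow> conv"
    using L_conv by blast
  fix U assume U: "conv_open U"
  show "conv_open {x \<in> conv. L x \<in> U}"
    unfolding conv_open_def
  proof (intro conjI ballI)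
    fix x assume x: "x \<in> {x \<in> conv. L x \<in> U}"
    then obtain N where "conv_nhd0 N" and N: "\<forall>n\<in>N. ser_add (L x) n \<in> U"
      using U unfolding conv_open_def by blast
    from \<open>conv_nhd0 N\<close> have "conv_nhd0 {v \<in> conv. L v \<in> N}"
      by (rule conv_nhd0_vimage)
    moreover have "ser_add x n \<in> {x \<in> conv. L x \<in> U}" if "n \<in> conv" "L n \<in> N" for n
      using that x N by (simp add: L_add conv_ser_add)
    ultimately show "\<exists>N. conv_nhd0 N \<and> (\<forall>n\<in>N. ser_add x n \<in> {x \<in> conv. L x \<in> U})"
      by blast
  qed blast
qed

end

theorem corollary1p1p4:
  shows "bij_betw F_conv conv conv
    \<and> continuous_map conv_topology conv_topology F_conv
    \<and> (\<forall>x\<in>conv. \<forall>y\<in>conv. F_conv (ser_add x y) = ser_add (F_conv x) (F_conv y))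
    \<and> (\<forall>c. \<forall>x\<in>conv. F_conv (ser_scale c x) = ser_scale c (F_conv x))
    \<and> (\<forall>x\<in>conv. \<forall>y\<in>conv. F_conv (ser_mult x y) = ser_mult (F_conv y) (F_conv x))
    \<and> F_conv (mon 0 0) = mon 0 0
    \<and> F_conv (mon 1 0) = mon 1 0
    \<and> F_conv (mon 0 1) = ser_scale (-1) (mon 0 1)
    \<and> (\<forall>p q. F_conv (mon p q) = ser_scale ((-1) ^ q) (ser_mult (mon 0 q) (mon p 0)))"
proof (intro conjI ballI allI)
  show "bij_betw F_conv conv conv"
    by (rule bij_betw_byWitness[where f' = F_conv]) (auto simp: F_conv_F_conv F_conv_conv)
  have F_conv_bounded: "\<exists>R'>1. \<forall>e>0. F_conv ` step_ball R e \<subseteq> step_ball R' e" if "R > 1" for R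
    using F_conv_step_ball that by (intro exI[of _ "4 * R"]) auto
  show "continuous_map conv_topology conv_topology F_conv"
    by (rule continuous_map_conv_topology) (simp_all add: F_conv_conv F_conv_ser_add F_conv_ser_scale F_conv_bounded)
  show "F_conv (mon 0 0) = mon 0 0" "F_conv (mon 1 0) = mon 1 0"
    by (simp_all add: F_conv_mon ser_mult_mon_mon ser_scale_def)
  show "F_conv (mon 0 1) = ser_scale (-1) (mon 0 1)"
    by (simp add: F_conv_mon ser_mult_mon_mon)
qed (simp_all add: F_conv_ser_add F_conv_ser_scale F_conv_ser_mult F_conv_mon)

end
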